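(* Let $(\mathcal C,S,T)$ be an association schemoid whose underlying category $\mathcal C$ is a connected groupoid and with $T(f)=f^{-1}$ for all morphisms $f$. Let $H:\mathcal C\to\mathbb K\text{-Mod}$ be a functor, $D=\pi^*p^*H$ the induced natural system, and $D_+\to\mathcal E\xrightarrow{q}\mathcal C$ a linear extension. Let $\widetilde S=\{q^{-1}(\sigma)\}_{\sigma\in S}$. Then $(\mathcal E,\widetilde S)$ is a quasi-schemoid, $\mathcal E$ is a groupoid, $(\mathcal E,\widetilde S,\widetilde T)$ with $\widetilde T(\tilde f)=\tilde f^{-1}$ is an association schemoid, and $q:(\mathcal E,\widetilde S,\widetilde T)\to(\mathcal C,S,T)$ is a morphism of association schemoids. Moreover, for $\sigma,\tau,\mu\in\widetilde S$ one has $p^\sigma_{\tau\mu}=\#D_g\cdot p^{q(\sigma)}_{q(\tau)q(\mu)}$ for any morphism $g$ of $\mathcal C$ (the cardinality $\#D_g$ is independent of $g$).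
   Context: Write $s(f),t(f)$ for source and target. A quasi-schemoid is a pair $(\mathcal C,S)$ with $\mathcal C$ a small category and $S$ a partition of $mor(\mathcal C)$ into nonempty blocks such that for all $\sigma,\tau,\mu\in S$ and $f,g\in\mu$ the sets $\{(a,b)\in\sigma\times\tau: s(a)=t(b), a\circ b=f\}$ and the analogous set for $g$ have equal cardinality, denoted $p^\mu_{\sigma\tau}$. An association schemoid is a triple $(\mathcal C,S,T)$ where $(\mathcal C,S)$ is a quasi-schemoid, every block containing an endomorphism consists only of endomorphisms, and $T$ is a contravariant endofunctor with $T^2=\mathrm{id}$ and $\{T(f):f\in\sigma\}\in S$ for all $\sigma$. A morphism of association schemoids is a functor mapping each block into a block and commuting with the $T$'s; $q(\sigma)$ denotes the block containing the image of $\sigma$. The category of factorizations $F(\mathcal C)$ has objects the morphisms of $\mathcal C$ and morphisms $f\to g$ the pairs $(\alpha,\beta)$ with $g=\alpha f\beta$. A natural system is a functor $D:F(\mathcal C)\to\mathbb K\text{-Mod}$; $f_*=D(f,1)$, $g^*=D(1,g)$. $\pi:F(\mathcal C)\to\mathcal C^{op}\times\mathcal C$ is $f\mapsto(s(f),t(f))$, $(\alpha,\beta)\mapsto(\beta,\alpha)$, and $p:\mathcal C^{op}\times\mathcal C\to\mathcal C$ is the projection to the second factor; thus $D_f=H(t(f))$. A linear extension $D_+\to\mathcal E\xrightarrow{q}\mathcal C$ consists of a category $\mathcal E$ with the same objects and a full functor $q$ that is the identity on objects, such that each $D_f$ acts transitively and freely on $q^{-1}(f)$ (written $f_0+\alpha$)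 and $(f_0+\alpha)(g_0+\beta)=f_0g_0+f_*\beta+g^*\alpha$. *)

theory Defs
  imports "HOL-Algebra.Module" "HOL-Library.Equipollence"
begin

record ('o, 'm) cat =
  cobj :: "'o set"
  cmor :: "'m set"
  cdom :: "'m \<Rightarrow> 'o"
  ccod :: "'m \<Rightarrow> 'o"
  cid  :: "'o \<Rightarrow> 'm"
  ccomp :: "'m \<Rightarrow> 'm \<Rightarrow> 'm"   (* ccomp C g f = g \<circ> f, defined when cdom g = ccod f *)

definition category :: "('o, 'm) cat \<Rightarrow> bool" where
  "category C \<longleftrightarrow>
     (\<forall>f\<in>cmor C. cdom C f \<in> cobj C \<and> ccod C f \<in> cobj C) \<and>
     (\<forall>x\<in>cobj C. cid C x \<in> cmor C \<and> cdom C (cid C x) = x \<and> ccod C (cid C x) = x) \<and>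
     (\<forall>f\<in>cmor C. \<forall>g\<in>cmor C. cdom C g = ccod C f \<longrightarrow>
        ccomp C g f \<in> cmor C \<and> cdom C (ccomp C g f) = cdom C f \<and> ccod C (ccomp C g f) = ccod C g) \<and>
     (\<forall>f\<in>cmor C. \<forall>g\<in>cmor C. \<forall>h\<in>cmor C. cdom C g = ccod C f \<longrightarrow> cdom C h = ccod C g \<longrightarrow>
        ccomp C h (ccomp C g f) = ccomp C (ccomp C h g) f) \<and>
     (\<forall>f\<in>cmor C. ccomp C (cid C (ccod C f)) f = f \<and> ccomp C f (cid C (cdom C f)) = f)"

definition is_inverse :: "('o, 'm) cat \<Rightarrow> 'm \<Rightarrow> 'm \<Rightarrow> bool" where
  "is_inverse C f g \<longleftrightarrow> g \<in> cmor C \<and> cdom C g = ccod C f \<and> ccod C g = cdom C f \<and>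
     ccomp C g f = cid C (cdom C f) \<and> ccomp C f g = cid C (ccod C f)"

definition inv_mor :: "('o, 'm) cat \<Rightarrow> 'm \<Rightarrow> 'm" where
  "inv_mor C f = (THE g. is_inverse C f g)"

definition groupoid :: "('o, 'm) cat \<Rightarrow> bool" where
  "groupoid C \<longleftrightarrow> category C \<and> (\<forall>f\<in>cmor C. \<exists>g. is_inverse C f g)"

definition connected :: "('o, 'm) cat \<Rightarrow> bool" where
  "connected C \<longleftrightarrow> (\<forall>x\<in>cobj C. \<forall>y\<in>cobj C. \<exists>f\<in>cmor C. cdom C f = x \<and> ccod C f = y)"

definition is_functor :: "('o, 'm) cat \<Rightarrow> ('p, 'n) cat \<Rightarrow> ('o \<Rightarrow> 'p) \<Rightarrow> ('m \<Rightarrow> 'n) \<Rightarrow> bool" where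
  "is_functor C D Fo Fm \<longleftrightarrow>
     (\<forall>x\<in>cobj C. Fo x \<in> cobj D) \<and> (\<forall>f\<in>cmor C. Fm f \<in> cmor D) \<and>
     (\<forall>f\<in>cmor C. cdom D (Fm f) = Fo (cdom C f) \<and> ccod D (Fm f) = Fo (ccod C f)) \<and>
     (\<forall>x\<in>cobj C. Fm (cid C x) = cid D (Fo x)) \<and>
     (\<forall>f\<in>cmor C. \<forall>g\<in>cmor C. cdom C g = ccod C f \<longrightarrow> Fm (ccomp C g f) = ccomp D (Fm g) (Fm f))"

definition contra_endofunctor :: "('o, 'm) cat \<Rightarrow> ('o \<Rightarrow> 'o) \<Rightarrow> ('m \<Rightarrow> 'm) \<Rightarrow> bool" where
  "contra_endofunctor C To Tm \<longleftrightarrow>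
     (\<forall>x\<in>cobj C. To x \<in> cobj C) \<and> (\<forall>f\<in>cmor C. Tm f \<in> cmor C) \<and>
     (\<forall>f\<in>cmor C. cdom C (Tm f) = To (ccod C f) \<and> ccod C (Tm f) = To (cdom C f)) \<and>
     (\<forall>x\<in>cobj C. Tm (cid C x) = cid C (To x)) \<and>
     (\<forall>f\<in>cmor C. \<forall>g\<in>cmor C. cdom C g = ccod C f \<longrightarrow> Tm (ccomp C g f) = ccomp C (Tm f) (Tm g))"

definition pairs :: "('o, 'm) cat \<Rightarrow> 'm set \<Rightarrow> 'm set \<Rightarrow> 'm \<Rightarrow> ('m \<times> 'm) set" where
  "pairs C \<sigma> \<tau> f = {(a, b). a \<in> \<sigma> \<and> b \<in> \<tau> \<and> cdom C a = ccod C b \<and> ccomp C a b = f}"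

definition is_partition :: "'m set \<Rightarrow> 'm set set \<Rightarrow> bool" where
  "is_partition M S \<longleftrightarrow> \<Union>S = M \<and> (\<forall>\<sigma>\<in>S. \<sigma> \<noteq> {}) \<and>
     (\<forall>\<sigma>\<in>S. \<forall>\<tau>\<in>S. \<sigma> \<noteq> \<tau> \<longrightarrow> \<sigma> \<inter> \<tau> = {})"

text \<open>Equal cardinality rendered as equipollence (cardinalities may be infinite).\<close>
definition quasi_schemoid :: "('o, 'm) cat \<Rightarrow> 'm set set \<Rightarrow> bool" where
  "quasi_schemoid C S \<longleftrightarrow> category C \<and> is_partition (cmor C) S \<and>
     (\<forall>\<sigma>\<in>S. \<forall>\<tau>\<in>S. \<forall>\<mu>\<in>S. \<forall>f\<in>\<mu>. \<forall>g\<in>\<mu>. pairs C \<sigma> \<tau> f \<approx> pairs C \<sigma> \<tau> g)"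

definition association_schemoid ::
  "('o, 'm) cat \<Rightarrow> 'm set set \<Rightarrow> ('o \<Rightarrow> 'o) \<Rightarrow> ('m \<Rightarrow> 'm) \<Rightarrow> bool" where
  "association_schemoid C S To Tm \<longleftrightarrow> quasi_schemoid C S \<and>
     (\<forall>\<sigma>\<in>S. (\<exists>f\<in>\<sigma>. cdom C f = ccod C f) \<longrightarrow> (\<forall>f\<in>\<sigma>. cdom C f = ccod C f)) \<and>
     contra_endofunctor C To Tm \<and>
     (\<forall>x\<in>cobj C. To (To x) = x) \<and> (\<forall>f\<in>cmor C. Tm (Tm f) = f) \<and>
     (\<forall>\<sigma>\<in>S. Tm ` \<sigma> \<in> S)"

definition as_morphism ::
  "('o, 'm) cat \<Rightarrow> 'm set set \<Rightarrow> ('o \<Rightarrow> 'o) \<Rightarrow> ('m \<Rightarrow> 'm) \<Rightarrow>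
   ('p, 'n) cat \<Rightarrow> 'n set set \<Rightarrow> ('p \<Rightarrow> 'p) \<Rightarrow> ('n \<Rightarrow> 'n) \<Rightarrow>
   ('o \<Rightarrow> 'p) \<Rightarrow> ('m \<Rightarrow> 'n) \<Rightarrow> bool" where
  "as_morphism C S To Tm C' S' To' Tm' Fo Fm \<longleftrightarrow> is_functor C C' Fo Fm \<and>
     (\<forall>\<sigma>\<in>S. \<exists>\<tau>\<in>S'. Fm ` \<sigma> \<subseteq> \<tau>) \<and>
     (\<forall>x\<in>cobj C. Fo (To x) = To' (Fo x)) \<and> (\<forall>f\<in>cmor C. Fm (Tm f) = Tm' (Fm f))"

text \<open>q(sigma): the block of S containing the image of sigma\<close>
definition img_block :: "'n set set \<Rightarrow> ('m \<Rightarrow> 'n) \<Rightarrow> 'm set \<Rightarrow> 'n set" where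
  "img_block S F \<sigma> = (THE \<tau>. \<tau> \<in> S \<and> F ` \<sigma> \<subseteq> \<tau>)"

definition linear_map :: "('k, 'z) ring_scheme \<Rightarrow> ('k, 'v) module \<Rightarrow> ('k, 'v) module \<Rightarrow> ('v \<Rightarrow> 'v) \<Rightarrow> bool" where
  "linear_map K M N h \<longleftrightarrow> (\<forall>x\<in>carrier M. h x \<in> carrier N) \<and>
     (\<forall>x\<in>carrier M. \<forall>y\<in>carrier M. h (x \<oplus>\<^bsub>M\<^esub> y) = h x \<oplus>\<^bsub>N\<^esub> h y) \<and>
     (\<forall>a\<in>carrier K. \<forall>x\<in>carrier M. h (a \<odot>\<^bsub>M\<^esub> x) = a \<odot>\<^bsub>N\<^esub> h x)"

definition mod_functor :: "('o, 'm) cat \<Rightarrow> 'k ring \<Rightarrow> ('o \<Rightarrow> ('k, 'v) module) \<Rightarrow> ('m \<Rightarrow> 'v \<Rightarrow> 'v) \<Rightarrow> bool" where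
  "mod_functor C K H Hm \<longleftrightarrow> cring K \<and>
     (\<forall>x\<in>cobj C. module K (H x)) \<and>
     (\<forall>f\<in>cmor C. linear_map K (H (cdom C f)) (H (ccod C f)) (Hm f)) \<and>
     (\<forall>x\<in>cobj C. \<forall>v\<in>carrier (H x). Hm (cid C x) v = v) \<and>
     (\<forall>f\<in>cmor C. \<forall>g\<in>cmor C. cdom C g = ccod C f \<longrightarrow>
        (\<forall>v\<in>carrier (H (cdom C f)). Hm (ccomp C g f) v = Hm g (Hm f v)))"

text \<open>Linear extension D_+ \<rightarrow> E \<rightarrow> C for the natural system D = pi^* p^* H, so that
  D_f = H(t f), f_* = D(f,1) = H(f), g^* = D(1,g) = identity.  The action of
  D_{q e} on q^{-1}(q e) is written act e alpha = e + alpha.\<close>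
definition linear_extension ::
  "('o, 'm) cat \<Rightarrow> 'k ring \<Rightarrow> ('o \<Rightarrow> ('k, 'v) module) \<Rightarrow> ('m \<Rightarrow> 'v \<Rightarrow> 'v) \<Rightarrow>
   ('o, 'e) cat \<Rightarrow> ('e \<Rightarrow> 'm) \<Rightarrow> ('e \<Rightarrow> 'v \<Rightarrow> 'e) \<Rightarrow> bool" where
  "linear_extension C K H Hm E q act \<longleftrightarrow>
     category E \<and> cobj E = cobj C \<and> is_functor E C id q \<and>
     \<comment> \<open>q is full\<close>
     (\<forall>x\<in>cobj E. \<forall>y\<in>cobj E. \<forall>f\<in>cmor C. cdom C f = x \<and> ccod C f = y \<longrightarrow>
        (\<exists>e\<in>cmor E. cdom E e = x \<and> ccod E e = y \<and> q e = f)) \<and>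
     \<comment> \<open>D_f acts on q^{-1}(f)\<close>
     (\<forall>e\<in>cmor E. \<forall>\<alpha>\<in>carrier (H (ccod C (q e))). act e \<alpha> \<in> cmor E \<and> q (act e \<alpha>) = q e) \<and>
     (\<forall>e\<in>cmor E. act e \<zero>\<^bsub>H (ccod C (q e))\<^esub> = e) \<and>
     (\<forall>e\<in>cmor E. \<forall>\<alpha>\<in>carrier (H (ccod C (q e))). \<forall>\<beta>\<in>carrier (H (ccod C (q e))).
        act (act e \<alpha>) \<beta> = act e (\<alpha> \<oplus>\<^bsub>H (ccod C (q e))\<^esub> \<beta>)) \<and>
     \<comment> \<open>transitively and freely\<close>
     (\<forall>e\<in>cmor E. \<forall>e'\<in>cmor E. q e' = q e \<longrightarrow> (\<exists>!\<alpha>. \<alpha> \<in> carrier (H (ccod C (q e))) \<and> e' = act e \<alpha>)) \<and>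
     \<comment> \<open>(f0 + alpha)(g0 + beta) = f0 g0 + f_* beta + g^* alpha\<close>
     (\<forall>f0\<in>cmor E. \<forall>g0\<in>cmor E. cdom E f0 = ccod E g0 \<longrightarrow>
        (\<forall>\<alpha>\<in>carrier (H (ccod C (q f0))). \<forall>\<beta>\<in>carrier (H (ccod C (q g0))).
          ccomp E (act f0 \<alpha>) (act g0 \<beta>) =
            act (ccomp E f0 g0) (Hm (q f0) \<beta> \<oplus>\<^bsub>H (ccod C (q f0))\<^esub> \<alpha>)))"

end

theory Submission
  imports Defs
begin

text \<open>
  Since \<open>q\<close> is full and each fibre \<open>q\<^sup>-\<^sup>1(f)\<close> is a torsor under \<open>D\<^sub>f = H(t f)\<close>, with
  \<open>(f\<^sub>0 + \<alpha>) g\<^sub>0 = f\<^sub>0 g\<^sub>0 + \<alpha>\<close>, every factorisation \<open>q(f) = a b\<close> in \<open>\<C>\<close> together with an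
  arbitrary lift \<open>b'\<close> of \<open>b\<close> has exactly one lift \<open>(a', b')\<close> with \<open>a' b' = f\<close>. Hence the pairs
  counted by \<open>p\<^sup>\<sigma>\<^sub>\<tau>\<^sub>\<mu>\<close> in \<open>\<E>\<close> correspond to a pair counted in \<open>\<C>\<close> together with an element of
  a fibre, and all fibres are equipollent to one module \<open>H(x)\<close> because \<open>H\<close> sends the
  isomorphisms of the connected groupoid \<open>\<C>\<close> to bijections. The same lifting of
  factorisations makes left inverses lift, so \<open>\<E>\<close> is a groupoid and \<open>q\<close> commutes with inversion.
\<close>

section \<open>Categories and groupoids\<close>

lemma cat_dom: "category C \<Longrightarrow> f \<in> cmor C \<Longrightarrow> cdom C f \<in> cobj C"
  and cat_cod: "category C \<Longrightarrow> f \<in> cmor C \<Longrightarrow> ccod C f \<in> cobj C"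
  and cat_id: "category C \<Longrightarrow> x \<in> cobj C \<Longrightarrow> cid C x \<in> cmor C"
  and cat_id_dom: "category C \<Longrightarrow> x \<in> cobj C \<Longrightarrow> cdom C (cid C x) = x"
  and cat_id_cod: "category C \<Longrightarrow> x \<in> cobj C \<Longrightarrow> ccod C (cid C x) = x"
  and cat_comp: "category C \<Longrightarrow> f \<in> cmor C \<Longrightarrow> g \<in> cmor C \<Longrightarrow> cdom C g = ccod C f \<Longrightarrow>
      ccomp C g f \<in> cmor C"
  and cat_comp_dom: "category C \<Longrightarrow> f \<in> cmor C \<Longrightarrow> g \<in> cmor C \<Longrightarrow> cdom C g = ccod C f \<Longrightarrow>
      cdom C (ccomp C g f) = cdom C f"
  and cat_comp_cod: "category C \<Longrightarrow> f \<in> cmor C \<Longrightarrow> g \<in> cmor C \<Longrightarrow> cdom C g = ccod C f \<Longrightarrow>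
      ccod C (ccomp C g f) = ccod C g"
  and cat_assoc: "category C \<Longrightarrow> f \<in> cmor C \<Longrightarrow> g \<in> cmor C \<Longrightarrow> h \<in> cmor C \<Longrightarrow>
      cdom C g = ccod C f \<Longrightarrow> cdom C h = ccod C g \<Longrightarrow>
      ccomp C h (ccomp C g f) = ccomp C (ccomp C h g) f"
  and cat_idl: "category C \<Longrightarrow> f \<in> cmor C \<Longrightarrow> ccomp C (cid C (ccod C f)) f = f"
  and cat_idr: "category C \<Longrightarrow> f \<in> cmor C \<Longrightarrow> ccomp C f (cid C (cdom C f)) = f"
  unfolding category_def by blast+

lemmas cat_simps = cat_dom cat_cod cat_id cat_id_dom cat_id_cod cat_comp cat_comp_dom cat_comp_cod
  cat_idl cat_idr

lemma groupoid_category: "groupoid C \<Longrightarrow> category C"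
  unfolding groupoid_def by blast

lemma is_inverse_unique:
  assumes C: "category C" and f: "f \<in> cmor C" and "is_inverse C f g" "is_inverse C f g'"
  shows "g = g'"
proof -
  have g: "g \<in> cmor C" "cdom C g = ccod C f" "ccomp C g f = cid C (cdom C f)"
    using assms(3) unfolding is_inverse_def by auto
  have g': "g' \<in> cmor C" "ccod C g' = cdom C f" "ccomp C f g' = cid C (ccod C f)"
    using assms(4) unfolding is_inverse_def by auto
  have "g = ccomp C g (ccomp C f g')" using cat_idr[OF C g(1)] g g' by simp
  also have "\<dots> = ccomp C (ccomp C g f) g'" using cat_assoc[OF C g'(1) f g(1)] g g' by simp
  also have "\<dots> = g'" using g g' cat_idl[OF C g'(1)] by simp
  finally show ?thesis .
qed

lemma is_inverse_sym: "is_inverse C f g \<Longrightarrow> f \<in> cmor C \<Longrightarrow> is_inverse C g f"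
  unfolding is_inverse_def by auto

lemma inv_mor_is_inverse: "groupoid C \<Longrightarrow> f \<in> cmor C \<Longrightarrow> is_inverse C f (inv_mor C f)"
  unfolding inv_mor_def groupoid_def by (metis (mono_tags, lifting) is_inverse_unique theI)

lemma inv_mor_eqI: "groupoid C \<Longrightarrow> f \<in> cmor C \<Longrightarrow> is_inverse C f g \<Longrightarrow> inv_mor C f = g"
  by (metis groupoid_category inv_mor_is_inverse is_inverse_unique)

lemma
  assumes "groupoid C" "f \<in> cmor C"
  shows inv_mor_closed: "inv_mor C f \<in> cmor C"
    and cdom_inv_mor: "cdom C (inv_mor C f) = ccod C f"
    and ccod_inv_mor: "ccod C (inv_mor C f) = cdom C f"
    and inv_mor_comp_left: "ccomp C (inv_mor C f) f = cid C (cdom C f)"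
    and inv_mor_comp_right: "ccomp C f (inv_mor C f) = cid C (ccod C f)"
  using inv_mor_is_inverse[OF assms] unfolding is_inverse_def by auto

lemma inv_mor_inv_mor: "groupoid C \<Longrightarrow> f \<in> cmor C \<Longrightarrow> inv_mor C (inv_mor C f) = f"
  by (meson inv_mor_eqI inv_mor_closed inv_mor_is_inverse is_inverse_sym)

lemma inv_mor_id:
  assumes G: "groupoid C" and x: "x \<in> cobj C"
  shows "inv_mor C (cid C x) = cid C x"
proof -
  have C: "category C" using G by (rule groupoid_category)
  have "is_inverse C (cid C x) (cid C x)"
    unfolding is_inverse_def using C x by (metis cat_id cat_id_cod cat_id_dom cat_idr)
  then show ?thesis using inv_mor_eqI[OF G cat_id[OF C x]] by simp
qed

lemma inv_mor_comp:
  assumes G: "groupoid C" and f: "f \<in> cmor C" and g: "g \<in> cmor C" and fg: "cdom C g = ccod C f"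
  shows "inv_mor C (ccomp C g f) = ccomp C (inv_mor C f) (inv_mor C g)"
proof -
  have C: "category C" using G by (rule groupoid_category)
  let ?f' = "inv_mor C f" and ?g' = "inv_mor C g"
  note f' = inv_mor_closed[OF G f] cdom_inv_mor[OF G f] ccod_inv_mor[OF G f]
    inv_mor_comp_left[OF G f] inv_mor_comp_right[OF G f]
  note g' = inv_mor_closed[OF G g] cdom_inv_mor[OF G g] ccod_inv_mor[OF G g]
    inv_mor_comp_left[OF G g] inv_mor_comp_right[OF G g]
  have gf: "ccomp C g f \<in> cmor C" "cdom C (ccomp C g f) = cdom C f"
    "ccod C (ccomp C g f) = ccod C g"
    using C f g fg by (simp_all add: cat_simps)
  have fg': "ccomp C ?f' ?g' \<in> cmor C" "cdom C (ccomp C ?f' ?g') = ccod C g"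
    "ccod C (ccomp C ?f' ?g') = cdom C f"
    using C f' g' fg by (simp_all add: cat_simps)
  have "ccomp C (ccomp C ?f' ?g') (ccomp C g f) = ccomp C ?f' (ccomp C (ccomp C ?g' g) f)"
    using cat_assoc[OF C gf(1) g'(1) f'(1)] cat_assoc[OF C f g g'(1)] f' g' gf fg by simp
  also have "\<dots> = cid C (cdom C f)" using f' g' fg cat_idl[OF C f] by simp
  finally have left: "ccomp C (ccomp C ?f' ?g') (ccomp C g f) = cid C (cdom C f)" .
  have "ccomp C (ccomp C g f) (ccomp C ?f' ?g') = ccomp C g (ccomp C (ccomp C f ?f') ?g')"
    using cat_assoc[OF C fg'(1) f g] cat_assoc[OF C g'(1) f'(1) f] f' g' fg' fg by simp
  also have "\<dots> = cid C (ccod C g)" using f' g' fg cat_idl[OF C g'(1)] by simp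
  finally have right: "ccomp C (ccomp C g f) (ccomp C ?f' ?g') = cid C (ccod C g)" .
  show ?thesis
    using inv_mor_eqI[OF G gf(1)] fg' gf left right unfolding is_inverse_def by simp
qed

lemma contra_endofunctor_inv_mor: "groupoid C \<Longrightarrow> contra_endofunctor C id (inv_mor C)"
  unfolding contra_endofunctor_def
  by (simp add: inv_mor_closed cdom_inv_mor ccod_inv_mor inv_mor_id inv_mor_comp)

lemma groupoid_if_left_inverses:
  assumes C: "category C"
    and left_inv: "\<And>f. f \<in> cmor C \<Longrightarrow> \<exists>h\<in>cmor C. cdom C h = ccod C f \<and> ccod C h = cdom C f \<and>
      ccomp C h f = cid C (cdom C f)"
  shows "groupoid C"
  unfolding groupoid_def
proof (intro conjI C ballI)
  fix f assume f: "f \<in> cmor C"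
  obtain h where h: "h \<in> cmor C" "cdom C h = ccod C f" "ccod C h = cdom C f"
    "ccomp C h f = cid C (cdom C f)"
    using left_inv[OF f] by blast
  obtain k where k: "k \<in> cmor C" "cdom C k = ccod C h" "ccod C k = cdom C h"
    "ccomp C k h = cid C (cdom C h)"
    using left_inv[OF h(1)] by blast
  have "k = ccomp C k (ccomp C h f)" using k h cat_idr[OF C k(1)] by simp
  also have "\<dots> = ccomp C (ccomp C k h) f" using cat_assoc[OF C f h(1) k(1)] h k by simp
  also have "\<dots> = f" using k h cat_idl[OF C f] by simp
  finally have "k = f" .
  then show "\<exists>g. is_inverse C f g" unfolding is_inverse_def using h k by auto
qed

lemma functor_is_inverse:
  assumes F: "is_functor E C id q" and E: "category E" and e: "e \<in> cmor E"
    and inv: "is_inverse E e h"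
  shows "is_inverse C (q e) (q h)"
  using F inv e E unfolding is_inverse_def is_functor_def by (metis cat_dom id_apply)

lemma contra_endofunctor_inv_mor_obj:
  assumes G: "groupoid C" and T: "contra_endofunctor C To Tm"
    and Tinv: "\<forall>f\<in>cmor C. Tm f = inv_mor C f" and x: "x \<in> cobj C"
  shows "To x = x"
proof -
  have C: "category C" using G by (rule groupoid_category)
  have "Tm (cid C x) = cid C x" using Tinv cat_id[OF C x] inv_mor_id[OF G x] by simp
  moreover have "cdom C (Tm (cid C x)) = To (ccod C (cid C x))"
    using T cat_id[OF C x] unfolding contra_endofunctor_def by blast
  ultimately show ?thesis using cat_id_dom[OF C x] cat_id_cod[OF C x] by simp
qed

lemma linear_map_zero:
  assumes "module K M" "module K N" "linear_map K M N h"
  shows "h \<zero>\<^bsub>M\<^esub> = \<zero>\<^bsub>N\<^esub>"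
proof -
  interpret M: module K M by fact
  interpret N: module K N by fact
  have z: "h \<zero>\<^bsub>M\<^esub> \<in> carrier N" using assms(3) unfolding linear_map_def by auto
  have "h \<zero>\<^bsub>M\<^esub> \<oplus>\<^bsub>N\<^esub> h \<zero>\<^bsub>M\<^esub> = h \<zero>\<^bsub>M\<^esub> \<oplus>\<^bsub>N\<^esub> \<zero>\<^bsub>N\<^esub>"
    using assms(3) z unfolding linear_map_def by (metis M.zero_closed M.l_zero N.r_zero)
  then show ?thesis using z by (metis N.add.right_cancel N.zero_closed N.a_comm)
qed

lemma mod_functor_carrier_eqpoll:
  assumes Hfun: "mod_functor C K H Hm" and G: "groupoid C" and conn: "connected C"
    and x: "x \<in> cobj C" and y: "y \<in> cobj C"
  shows "carrier (H x) \<approx> carrier (H y)"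
proof -
  obtain f where f: "f \<in> cmor C" "cdom C f = x" "ccod C f = y"
    using conn x y unfolding connected_def by metis
  let ?f' = "inv_mor C f"
  have f': "?f' \<in> cmor C" "cdom C ?f' = y" "ccod C ?f' = x"
    using inv_mor_closed[OF G f(1)] cdom_inv_mor[OF G f(1)] ccod_inv_mor[OF G f(1)] f by auto
  have lin: "linear_map K (H x) (H y) (Hm f)" "linear_map K (H y) (H x) (Hm ?f')"
    using Hfun f f' unfolding mod_functor_def by metis+
  have Hcomp: "\<And>f g v. f \<in> cmor C \<Longrightarrow> g \<in> cmor C \<Longrightarrow> cdom C g = ccod C f \<Longrightarrow>
      v \<in> carrier (H (cdom C f)) \<Longrightarrow> Hm (ccomp C g f) v = Hm g (Hm f v)"
    and Hid: "\<And>x v. x \<in> cobj C \<Longrightarrow> v \<in> carrier (H x) \<Longrightarrow> Hm (cid C x) v = v"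
    using Hfun unfolding mod_functor_def by blast+
  have "bij_betw (Hm f) (carrier (H x)) (carrier (H y))"
  proof (rule bij_betw_byWitness[where f'="Hm ?f'"])
    show "\<forall>a\<in>carrier (H x). Hm ?f' (Hm f a) = a"
      using Hcomp[OF f(1) f'(1)] inv_mor_comp_left[OF G f(1)] Hid[OF x] f f' by simp
    show "\<forall>a\<in>carrier (H y). Hm f (Hm ?f' a) = a"
      using Hcomp[OF f'(1) f(1)] inv_mor_comp_right[OF G f(1)] Hid[OF y] f f' by simp
    show "Hm f ` carrier (H x) \<subseteq> carrier (H y)" "Hm ?f' ` carrier (H y) \<subseteq> carrier (H x)"
      using lin unfolding linear_map_def by blast+
  qed
  then show ?thesis unfolding eqpoll_def by blast
qed

lemma is_partition_preimage:
  assumes P: "is_partition B S" and onto: "q ` A = B"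
  shows "is_partition A ((\<lambda>\<sigma>. {a \<in> A. q a \<in> \<sigma>}) ` S)"
  unfolding is_partition_def
proof (intro conjI ballI impI)
  have "\<Union>S = q ` A" using P onto unfolding is_partition_def by simp
  then show "\<Union> ((\<lambda>\<sigma>. {a \<in> A. q a \<in> \<sigma>}) ` S) = A" by blast
next
  fix \<sigma>' assume "\<sigma>' \<in> (\<lambda>\<sigma>. {a \<in> A. q a \<in> \<sigma>}) ` S"
  then obtain \<sigma> where "\<sigma> \<in> S" "\<sigma>' = {a \<in> A. q a \<in> \<sigma>}" by blast
  moreover have "\<sigma> \<noteq> {}" "\<sigma> \<subseteq> q ` A"
    using P onto \<open>\<sigma> \<in> S\<close> unfolding is_partition_def by blast+
  ultimately show "\<sigma>' \<noteq> {}" by blast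
next
  fix \<sigma>' \<tau>' assume "\<sigma>' \<in> (\<lambda>\<sigma>. {a \<in> A. q a \<in> \<sigma>}) ` S" "\<tau>' \<in> (\<lambda>\<sigma>. {a \<in> A. q a \<in> \<sigma>}) ` S"
    and ne: "\<sigma>' \<noteq> \<tau>'"
  then obtain \<sigma> \<tau> where "\<sigma> \<in> S" "\<tau> \<in> S" "\<sigma>' = {a \<in> A. q a \<in> \<sigma>}" "\<tau>' = {a \<in> A. q a \<in> \<tau>}"
    by blast
  moreover from this ne have "\<sigma> \<inter> \<tau> = {}" using P unfolding is_partition_def by metis
  ultimately show "\<sigma>' \<inter> \<tau>' = {}" by blast
qed

lemma img_block_preimage:
  assumes P: "is_partition B S" and onto: "q ` A = B" and \<sigma>: "\<sigma> \<in> S"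
  shows "img_block S q {a \<in> A. q a \<in> \<sigma>} = \<sigma>"
proof -
  have "\<sigma> \<subseteq> q ` A" using P onto \<sigma> unfolding is_partition_def by blast
  then have "q ` {a \<in> A. q a \<in> \<sigma>} = \<sigma>" by blast
  moreover have "\<tau> = \<sigma>" if "\<tau> \<in> S" "\<sigma> \<subseteq> \<tau>" for \<tau>
    using P \<sigma> that unfolding is_partition_def by blast
  ultimately show ?thesis unfolding img_block_def using \<sigma> by (simp, intro the_equality) auto
qed

section \<open>Linear extensions\<close>

locale lin_ext =
  fixes C :: "('o, 'm) cat" and K :: "'k ring" and H :: "'o \<Rightarrow> ('k, 'v) module"
    and Hm :: "'m \<Rightarrow> 'v \<Rightarrow> 'v" and E :: "('o, 'e) cat" and q :: "'e \<Rightarrow> 'm"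
    and act :: "'e \<Rightarrow> 'v \<Rightarrow> 'e"
  assumes base_category: "category C"
    and mod_functor: "mod_functor C K H Hm"
    and linear_extension: "linear_extension C K H Hm E q act"
begin

lemma category: "category E"
  and cobj_eq: "cobj E = cobj C"
  and q_functor: "is_functor E C id q"
  and full_ax: "\<forall>x\<in>cobj E. \<forall>y\<in>cobj E. \<forall>f\<in>cmor C. cdom C f = x \<and> ccod C f = y \<longrightarrow>
      (\<exists>e\<in>cmor E. cdom E e = x \<and> ccod E e = y \<and> q e = f)"
  and act_fiber_ax: "\<forall>e\<in>cmor E. \<forall>\<alpha>\<in>carrier (H (ccod C (q e))). act e \<alpha> \<in> cmor E \<and> q (act e \<alpha>) = q e"
  and act_zero_ax: "\<forall>e\<in>cmor E. act e \<zero>\<^bsub>H (ccod C (q e))\<^esub> = e"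
  and act_transitive_free_ax: "\<forall>e\<in>cmor E. \<forall>e'\<in>cmor E. q e' = q e \<longrightarrow>
      (\<exists>!\<alpha>. \<alpha> \<in> carrier (H (ccod C (q e))) \<and> e' = act e \<alpha>)"
  and comp_act_ax: "\<forall>f0\<in>cmor E. \<forall>g0\<in>cmor E. cdom E f0 = ccod E g0 \<longrightarrow>
      (\<forall>\<alpha>\<in>carrier (H (ccod C (q f0))). \<forall>\<beta>\<in>carrier (H (ccod C (q g0))).
        ccomp E (act f0 \<alpha>) (act g0 \<beta>) =
          act (ccomp E f0 g0) (Hm (q f0) \<beta> \<oplus>\<^bsub>H (ccod C (q f0))\<^esub> \<alpha>))"
  by (insert linear_extension, unfold linear_extension_def, (elim conjE, assumption)+)

lemma q_full: "f \<in> cmor C \<Longrightarrow> \<exists>e\<in>cmor E. cdom E e = cdom C f \<and> ccod E e = ccod C f \<and> q e = f"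
  using full_ax cobj_eq cat_dom[OF base_category] cat_cod[OF base_category] by metis

lemma act_closed: "e \<in> cmor E \<Longrightarrow> \<alpha> \<in> carrier (H (ccod C (q e))) \<Longrightarrow> act e \<alpha> \<in> cmor E"
  and q_act: "e \<in> cmor E \<Longrightarrow> \<alpha> \<in> carrier (H (ccod C (q e))) \<Longrightarrow> q (act e \<alpha>) = q e"
  and act_zero: "e \<in> cmor E \<Longrightarrow> act e \<zero>\<^bsub>H (ccod C (q e))\<^esub> = e"
  and act_transitive_free: "e \<in> cmor E \<Longrightarrow> e' \<in> cmor E \<Longrightarrow> q e' = q e \<Longrightarrow>
      \<exists>!\<alpha>. \<alpha> \<in> carrier (H (ccod C (q e))) \<and> e' = act e \<alpha>"
  using act_fiber_ax act_zero_ax act_transitive_free_ax by blast+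

lemma comp_act:
  "f0 \<in> cmor E \<Longrightarrow> g0 \<in> cmor E \<Longrightarrow> cdom E f0 = ccod E g0 \<Longrightarrow>
    \<alpha> \<in> carrier (H (ccod C (q f0))) \<Longrightarrow> \<beta> \<in> carrier (H (ccod C (q g0))) \<Longrightarrow>
    ccomp E (act f0 \<alpha>) (act g0 \<beta>) = act (ccomp E f0 g0) (Hm (q f0) \<beta> \<oplus>\<^bsub>H (ccod C (q f0))\<^esub> \<alpha>)"
  using comp_act_ax by blast

lemma q_mor: "e \<in> cmor E \<Longrightarrow> q e \<in> cmor C"
  and cdom_q: "e \<in> cmor E \<Longrightarrow> cdom C (q e) = cdom E e"
  and ccod_q: "e \<in> cmor E \<Longrightarrow> ccod C (q e) = ccod E e"
  and q_id: "x \<in> cobj E \<Longrightarrow> q (cid E x) = cid C x"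
  and q_comp: "e1 \<in> cmor E \<Longrightarrow> e2 \<in> cmor E \<Longrightarrow> cdom E e2 = ccod E e1 \<Longrightarrow>
      q (ccomp E e2 e1) = ccomp C (q e2) (q e1)"
  using q_functor unfolding is_functor_def by auto

lemma q_onto: "q ` cmor E = cmor C"
  using q_mor q_full by blast

lemma module_H: "x \<in> cobj C \<Longrightarrow> module K (H x)"
  using mod_functor unfolding mod_functor_def by blast

lemma linear_Hm: "f \<in> cmor C \<Longrightarrow> linear_map K (H (cdom C f)) (H (ccod C f)) (Hm f)"
  using mod_functor unfolding mod_functor_def by blast

lemma cdom_act: "e \<in> cmor E \<Longrightarrow> \<alpha> \<in> carrier (H (ccod C (q e))) \<Longrightarrow> cdom E (act e \<alpha>) = cdom E e"
  by (metis act_closed cdom_q q_act)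

lemma ccod_act: "e \<in> cmor E \<Longrightarrow> \<alpha> \<in> carrier (H (ccod C (q e))) \<Longrightarrow> ccod E (act e \<alpha>) = ccod E e"
  by (metis act_closed ccod_q q_act)

lemma act_inj:
  "e \<in> cmor E \<Longrightarrow> \<alpha> \<in> carrier (H (ccod C (q e))) \<Longrightarrow> \<beta> \<in> carrier (H (ccod C (q e))) \<Longrightarrow>
    act e \<alpha> = act e \<beta> \<Longrightarrow> \<alpha> = \<beta>"
  using act_transitive_free[OF _ act_closed q_act] by blast

lemma fiber_eq_act_image:
  assumes e: "e \<in> cmor E"
  shows "{e' \<in> cmor E. q e' = q e} = act e ` carrier (H (ccod C (q e)))"
  using act_transitive_free[OF e] act_closed[OF e] q_act[OF e] by blast

lemma fiber_eqpoll:
  assumes f: "f \<in> cmor C"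
  shows "{e \<in> cmor E. q e = f} \<approx> carrier (H (ccod C f))"
proof -
  obtain e where e: "e \<in> cmor E" "q e = f" using q_full[OF f] by blast
  have "inj_on (act e) (carrier (H (ccod C f)))"
    using act_inj[OF e(1)] e(2) by (auto intro: inj_onI)
  then have "carrier (H (ccod C f)) \<approx> act e ` carrier (H (ccod C f))"
    unfolding eqpoll_def bij_betw_def by blast
  then show ?thesis using fiber_eq_act_image[OF e(1)] e(2) eqpoll_sym by simp
qed

text \<open>The case \<open>\<beta> = 0\<close> of the composition law: \<open>(f\<^sub>0 + \<alpha>) g\<^sub>0 = f\<^sub>0 g\<^sub>0 + \<alpha>\<close>.\<close>

lemma comp_act_left:
  assumes f0: "f0 \<in> cmor E" and g0: "g0 \<in> cmor E" and d: "cdom E f0 = ccod E g0"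
    and \<alpha>: "\<alpha> \<in> carrier (H (ccod C (q f0)))"
  shows "ccomp E (act f0 \<alpha>) g0 = act (ccomp E f0 g0) \<alpha>"
proof -
  let ?x = "ccod C (q g0)" and ?y = "ccod C (q f0)"
  have objs: "?x \<in> cobj C" "?y \<in> cobj C"
    using cat_cod[OF base_category] q_mor f0 g0 by auto
  interpret X: module K "H ?x" using module_H[OF objs(1)] .
  interpret Y: module K "H ?y" using module_H[OF objs(2)] .
  have "cdom C (q f0) = ?x" using d cdom_q[OF f0] ccod_q[OF g0] by simp
  then have "Hm (q f0) \<zero>\<^bsub>H ?x\<^esub> = \<zero>\<^bsub>H ?y\<^esub>"
    using linear_map_zero[OF module_H[OF objs(1)] module_H[OF objs(2)]] linear_Hm[OF q_mor[OF f0]]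
    by simp
  then have "ccomp E (act f0 \<alpha>) (act g0 \<zero>\<^bsub>H ?x\<^esub>) = act (ccomp E f0 g0) \<alpha>"
    using comp_act[OF f0 g0 d \<alpha>] \<alpha> by simp
  then show ?thesis using act_zero[OF g0] by simp
qed

lemma ccod_q_comp:
  "f0 \<in> cmor E \<Longrightarrow> g0 \<in> cmor E \<Longrightarrow> cdom E f0 = ccod E g0 \<Longrightarrow>
    ccod C (q (ccomp E f0 g0)) = ccod C (q f0)"
  by (simp add: category cat_comp cat_comp_cod ccod_q)

lemma comp_right_cancel_fiber:
  assumes a1: "a1 \<in> cmor E" and a2: "a2 \<in> cmor E" and b: "b \<in> cmor E" and qa: "q a1 = q a2"
    and d1: "cdom E a1 = ccod E b" and d2: "cdom E a2 = ccod E b"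
    and eq: "ccomp E a1 b = ccomp E a2 b"
  shows "a1 = a2"
proof -
  let ?y = "ccod C (q a1)"
  obtain \<alpha> where \<alpha>: "\<alpha> \<in> carrier (H ?y)" "a2 = act a1 \<alpha>"
    using act_transitive_free[OF a1 a2] qa by metis
  interpret Y: module K "H ?y" using module_H cat_cod[OF base_category q_mor[OF a1]] by blast
  have ab: "ccomp E a1 b \<in> cmor E" using cat_comp[OF category b a1 d1] .
  have y: "ccod C (q (ccomp E a1 b)) = ?y" using ccod_q_comp[OF a1 b d1] .
  have "act (ccomp E a1 b) \<alpha> = act (ccomp E a1 b) \<zero>\<^bsub>H ?y\<^esub>"
    using comp_act_left[OF a1 b d1 \<alpha>(1)] \<alpha>(2) eq act_zero[OF ab] y by simp
  then have "\<alpha> = \<zero>\<^bsub>H ?y\<^esub>" using act_inj[OF ab] \<alpha>(1) y by simp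
  then show ?thesis using \<alpha>(2) act_zero[OF a1] by simp
qed

text \<open>Existence of lifts of factorisations: move \<open>a'\<close> within its fibre.\<close>

lemma lift_factor_left:
  assumes a': "a' \<in> cmor E" and b: "b \<in> cmor E" and d: "cdom E a' = ccod E b"
    and f: "f \<in> cmor E" and qf: "q f = q (ccomp E a' b)"
  obtains a where "a \<in> cmor E" "q a = q a'" "cdom E a = cdom E a'" "ccod E a = ccod E a'"
    "ccomp E a b = f"
proof -
  have ab: "ccomp E a' b \<in> cmor E" using cat_comp[OF category b a' d] .
  obtain \<gamma> where \<gamma>: "\<gamma> \<in> carrier (H (ccod C (q a')))" "f = act (ccomp E a' b) \<gamma>"
    using act_transitive_free[OF ab f qf] ccod_q_comp[OF a' b d] by metis
  show thesis
    by (rule that[of "act a' \<gamma>"])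
      (use act_closed q_act cdom_act ccod_act comp_act_left[OF a' b d] a' \<gamma> in simp_all)
qed

lemma groupoid_if_base_groupoid:
  assumes G: "groupoid C"
  shows "groupoid E"
proof (rule groupoid_if_left_inverses[OF category])
  fix e assume e: "e \<in> cmor E"
  let ?x = "cdom E e"
  have x: "?x \<in> cobj E" using cat_dom[OF category e] .
  obtain e' where e': "e' \<in> cmor E" "cdom E e' = ccod E e" "ccod E e' = ?x"
    "q e' = inv_mor C (q e)"
    using q_full[OF inv_mor_closed[OF G q_mor[OF e]]]
      cdom_inv_mor[OF G q_mor[OF e]] ccod_inv_mor[OF G q_mor[OF e]] cdom_q[OF e] ccod_q[OF e]
    by metis
  have "q (cid E ?x) = q (ccomp E e' e)"
    using q_comp[OF e e'(1,2)] e'(4) inv_mor_comp_left[OF G q_mor[OF e]] q_id[OF x] cdom_q[OF e]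
    by simp
  then obtain h where "h \<in> cmor E" "cdom E h = cdom E e'" "ccod E h = ccod E e'"
    "ccomp E h e = cid E ?x"
    using lift_factor_left[OF e'(1) e e'(2) cat_id[OF category x]] by metis
  then show "\<exists>h\<in>cmor E. cdom E h = ccod E e \<and> ccod E h = cdom E e \<and> ccomp E h e = cid E ?x"
    using e' by auto
qed

lemma q_inv_mor:
  assumes G: "groupoid C" and e: "e \<in> cmor E"
  shows "q (inv_mor E e) = inv_mor C (q e)"
  using functor_is_inverse[OF q_functor category e inv_mor_is_inverse[OF groupoid_if_base_groupoid[OF G] e]]
    inv_mor_eqI[OF G q_mor[OF e]] by simp

lemma pairs_preimage_lift:
  assumes \<tau>: "\<tau> \<subseteq> cmor C" and f: "f \<in> cmor E" and b: "b \<in> cmor E"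
    and p: "(a0, q b) \<in> pairs C \<tau> \<mu> (q f)"
  obtains a where "(a, b) \<in> pairs E {e \<in> cmor E. q e \<in> \<tau>} {e \<in> cmor E. q e \<in> \<mu>} f" "q a = a0"
proof -
  from p have a0: "a0 \<in> \<tau>" and "q b \<in> \<mu>" "cdom C a0 = ccod C (q b)" "ccomp C a0 (q b) = q f"
    unfolding pairs_def by auto
  obtain a' where a': "a' \<in> cmor E" "cdom E a' = cdom C a0" "q a' = a0"
    using q_full[OF subsetD[OF \<tau> a0]] by blast
  have d: "cdom E a' = ccod E b" using a' ccod_q[OF b] \<open>cdom C a0 = ccod C (q b)\<close> by simp
  have "q f = q (ccomp E a' b)" using q_comp[OF b a'(1) d] a' \<open>ccomp C a0 (q b) = q f\<close> by simp
  then obtain a where a: "a \<in> cmor E" "q a = a0" "cdom E a = ccod E b" "ccomp E a b = f"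
    using lift_factor_left[OF a'(1) b d f] a'(3) d by metis
  then have "(a, b) \<in> pairs E {e \<in> cmor E. q e \<in> \<tau>} {e \<in> cmor E. q e \<in> \<mu>} f"
    unfolding pairs_def using a0 b \<open>q b \<in> \<mu>\<close> by simp
  then show thesis using a(2) by (rule that)
qed

lemma pairs_preimage_eqpoll_Sigma:
  assumes \<tau>: "\<tau> \<subseteq> cmor C" and f: "f \<in> cmor E"
  shows "pairs E {e \<in> cmor E. q e \<in> \<tau>} {e \<in> cmor E. q e \<in> \<mu>} f
    \<approx> Sigma (pairs C \<tau> \<mu> (q f)) (\<lambda>x. {b \<in> cmor E. q b = snd x})"
proof -
  let ?P = "pairs E {e \<in> cmor E. q e \<in> \<tau>} {e \<in> cmor E. q e \<in> \<mu>} f"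
  let ?Q = "Sigma (pairs C \<tau> \<mu> (q f)) (\<lambda>x. {b \<in> cmor E. q b = snd x})"
  let ?\<phi> = "\<lambda>(a, b). ((q a, q b), b)"
  have "inj_on ?\<phi> ?P"
  proof (rule inj_onI)
    fix x y assume x: "x \<in> ?P" and y: "y \<in> ?P" and eq: "?\<phi> x = ?\<phi> y"
    obtain a1 b1 a2 b2 where xy: "x = (a1, b1)" "y = (a2, b2)" by fastforce
    have "q a1 = q a2" "b1 = b2" using eq xy by simp_all
    moreover have "a1 = a2"
      using x y comp_right_cancel_fiber[of a1 a2 b1] calculation unfolding xy pairs_def by auto
    ultimately show "x = y" using xy by simp
  qed
  moreover have "?\<phi> x \<in> ?Q" if "x \<in> ?P" for x
  proof -
    obtain a b where x: "x = (a, b)" by fastforce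
    from that have a: "a \<in> cmor E" "q a \<in> \<tau>" and b: "b \<in> cmor E" "q b \<in> \<mu>"
      and d: "cdom E a = ccod E b" and c: "ccomp E a b = f"
      unfolding x pairs_def by auto
    then have "(q a, q b) \<in> pairs C \<tau> \<mu> (q f)"
      unfolding pairs_def using cdom_q[OF a(1)] ccod_q[OF b(1)] q_comp[OF b(1) a(1) d] c by simp
    then show ?thesis using b x by simp
  qed
  then have "?\<phi> ` ?P \<subseteq> ?Q" by (rule image_subsetI)
  moreover have "?Q \<subseteq> ?\<phi> ` ?P"
  proof
    fix z assume "z \<in> ?Q"
    then obtain p b where p: "p \<in> pairs C \<tau> \<mu> (q f)" and b: "b \<in> cmor E" "q b = snd p"
      and z: "z = (p, b)" by blast
    obtain a0 where p0: "p = (a0, q b)" using b(2) by (cases p) simp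
    from p have "(a0, q b) \<in> pairs C \<tau> \<mu> (q f)" unfolding p0 .
    then obtain a where "(a, b) \<in> ?P" "q a = a0" by (rule pairs_preimage_lift[OF \<tau> f b(1)])
    then show "z \<in> ?\<phi> ` ?P" by (force simp: z p0)
  qed
  ultimately have "bij_betw ?\<phi> ?P ?Q" unfolding bij_betw_def by blast
  then show ?thesis unfolding eqpoll_def by blast
qed

lemma pairs_preimage_eqpoll:
  assumes G: "groupoid C" and conn: "connected C" and \<tau>: "\<tau> \<subseteq> cmor C" and \<mu>: "\<mu> \<subseteq> cmor C"
    and f: "f \<in> cmor E" and g: "g \<in> cmor C"
  shows "pairs E {e \<in> cmor E. q e \<in> \<tau>} {e \<in> cmor E. q e \<in> \<mu>} f
    \<approx> carrier (H (ccod C g)) \<times> pairs C \<tau> \<mu> (q f)"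
proof -
  let ?V = "carrier (H (ccod C g))"
  have "Sigma (pairs C \<tau> \<mu> (q f)) (\<lambda>x. {b \<in> cmor E. q b = snd x}) \<approx> pairs C \<tau> \<mu> (q f) \<times> ?V"
  proof (rule Sigma_eqpoll_cong[OF bij_betw_id])
    fix x assume "x \<in> pairs C \<tau> \<mu> (q f)"
    then have x: "snd x \<in> cmor C" using \<mu> unfolding pairs_def by auto
    have "{b \<in> cmor E. q b = snd x} \<approx> carrier (H (ccod C (snd x)))" by (rule fiber_eqpoll[OF x])
    also have "\<dots> \<approx> ?V"
      using mod_functor_carrier_eqpoll[OF mod_functor G conn] cat_cod[OF base_category] x g
      by blast
    finally show "{b \<in> cmor E. q b = snd x} \<approx> ?V" .
  qed
  also have "\<dots> \<approx> ?V \<times> pairs C \<tau> \<mu> (q f)" by (rule times_commute_eqpoll)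
  finally show ?thesis using pairs_preimage_eqpoll_Sigma[OF \<tau> f] eqpoll_trans by blast
qed

lemma quasi_schemoid_preimage:
  assumes S: "quasi_schemoid C S" and G: "groupoid C" and conn: "connected C"
  shows "quasi_schemoid E ((\<lambda>\<sigma>. {e \<in> cmor E. q e \<in> \<sigma>}) ` S)"
proof -
  have P: "is_partition (cmor C) S"
    and pairs_eq: "\<And>\<sigma> \<tau> \<mu> f g. \<sigma> \<in> S \<Longrightarrow> \<tau> \<in> S \<Longrightarrow> \<mu> \<in> S \<Longrightarrow> f \<in> \<mu> \<Longrightarrow> g \<in> \<mu> \<Longrightarrow>
      pairs C \<sigma> \<tau> f \<approx> pairs C \<sigma> \<tau> g"
    using S unfolding quasi_schemoid_def by blast+
  have sub: "\<sigma> \<subseteq> cmor C" if "\<sigma> \<in> S" for \<sigma> using P that unfolding is_partition_def by blast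
  have "pairs E {e \<in> cmor E. q e \<in> \<sigma>} {e \<in> cmor E. q e \<in> \<tau>} f
      \<approx> pairs E {e \<in> cmor E. q e \<in> \<sigma>} {e \<in> cmor E. q e \<in> \<tau>} g"
    if "\<sigma> \<in> S" "\<tau> \<in> S" "\<mu> \<in> S" "f \<in> cmor E" "q f \<in> \<mu>" "g \<in> cmor E" "q g \<in> \<mu>"
    for \<sigma> \<tau> \<mu> f g
  proof -
    let ?V = "carrier (H (ccod C (q f)))"
    note count = pairs_preimage_eqpoll[OF G conn sub[OF \<open>\<sigma> \<in> S\<close>] sub[OF \<open>\<tau> \<in> S\<close>] _ q_mor[OF \<open>f \<in> cmor E\<close>]]
    have "pairs E {e \<in> cmor E. q e \<in> \<sigma>} {e \<in> cmor E. q e \<in> \<tau>} f \<approx> ?V \<times> pairs C \<sigma> \<tau> (q f)"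
      using count that by blast
    also have "\<dots> \<approx> ?V \<times> pairs C \<sigma> \<tau> (q g)"
      using times_eqpoll_cong[OF eqpoll_refl pairs_eq] that by blast
    also have "\<dots> \<approx> pairs E {e \<in> cmor E. q e \<in> \<sigma>} {e \<in> cmor E. q e \<in> \<tau>} g"
      using count that eqpoll_sym by blast
    finally show ?thesis .
  qed
  then show ?thesis
    unfolding quasi_schemoid_def using category is_partition_preimage[OF P q_onto] by auto
qed

lemma inv_mor_image_preimage:
  assumes G: "groupoid C" and \<sigma>: "\<sigma> \<subseteq> cmor C"
  shows "inv_mor E ` {e \<in> cmor E. q e \<in> \<sigma>} = {e \<in> cmor E. q e \<in> inv_mor C ` \<sigma>}"
proof -
  have GE: "groupoid E" using G by (rule groupoid_if_base_groupoid)
  have "inv_mor E ` {e \<in> cmor E. q e \<in> \<sigma>} \<subseteq> {e \<in> cmor E. q e \<in> inv_mor C ` \<sigma>}"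
    using inv_mor_closed[OF GE] q_inv_mor[OF G] by auto
  moreover have "e \<in> inv_mor E ` {e \<in> cmor E. q e \<in> \<sigma>}"
    if e: "e \<in> cmor E" "q e = inv_mor C f" "f \<in> \<sigma>" for e f
  proof -
    have "q (inv_mor E e) = f" using q_inv_mor[OF G e(1)] e inv_mor_inv_mor[OF G] \<sigma> by auto
    then show ?thesis using inv_mor_inv_mor[OF GE e(1)] inv_mor_closed[OF GE e(1)] e(3)
      by (metis (mono_tags, lifting) image_eqI mem_Collect_eq)
  qed
  ultimately show ?thesis by blast
qed

lemma association_schemoid_preimage:
  assumes S: "association_schemoid C S To Tm" and G: "groupoid C" and conn: "connected C"
    and Tinv: "\<forall>f\<in>cmor C. Tm f = inv_mor C f"
  shows "association_schemoid E ((\<lambda>\<sigma>. {e \<in> cmor E. q e \<in> \<sigma>}) ` S) id (inv_mor E)"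
proof -
  have GE: "groupoid E" using G by (rule groupoid_if_base_groupoid)
  have QS: "quasi_schemoid C S"
    and endo: "\<forall>\<sigma>\<in>S. (\<exists>f\<in>\<sigma>. cdom C f = ccod C f) \<longrightarrow> (\<forall>f\<in>\<sigma>. cdom C f = ccod C f)"
    and T_blocks: "\<forall>\<sigma>\<in>S. Tm ` \<sigma> \<in> S"
    using S unfolding association_schemoid_def by blast+
  have sub: "\<sigma> \<subseteq> cmor C" if "\<sigma> \<in> S" for \<sigma>
    using QS that unfolding quasi_schemoid_def is_partition_def by blast
  have "inv_mor C ` \<sigma> \<in> S" if "\<sigma> \<in> S" for \<sigma>
    using T_blocks Tinv sub[OF that] that by (metis image_cong subsetD)
  then have inv_blocks: "\<forall>\<sigma>'\<in>(\<lambda>\<sigma>. {e \<in> cmor E. q e \<in> \<sigma>}) ` S. inv_mor E ` \<sigma>' \<in> (\<lambda>\<sigma>. {e \<in> cmor E. q e \<in> \<sigma>}) ` S"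
    using inv_mor_image_preimage[OF G sub] by auto
  have "\<forall>\<sigma>'\<in>(\<lambda>\<sigma>. {e \<in> cmor E. q e \<in> \<sigma>}) ` S.
      (\<exists>f\<in>\<sigma>'. cdom E f = ccod E f) \<longrightarrow> (\<forall>f\<in>\<sigma>'. cdom E f = ccod E f)"
    using endo by (auto simp: cdom_q[symmetric] ccod_q[symmetric])
  then show ?thesis
    unfolding association_schemoid_def
    using quasi_schemoid_preimage[OF QS G conn] contra_endofunctor_inv_mor[OF GE]
      inv_mor_inv_mor[OF GE] inv_blocks by simp
qed

lemma as_morphism_q:
  assumes S: "association_schemoid C S To Tm" and G: "groupoid C"
    and Tinv: "\<forall>f\<in>cmor C. Tm f = inv_mor C f"
  shows "as_morphism E ((\<lambda>\<sigma>. {e \<in> cmor E. q e \<in> \<sigma>}) ` S) id (inv_mor E) C S To Tm id q"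
proof -
  have "contra_endofunctor C To Tm" using S unfolding association_schemoid_def by blast
  then have "\<forall>x\<in>cobj E. To x = x"
    using contra_endofunctor_inv_mor_obj[OF G _ Tinv] cobj_eq by simp
  then show ?thesis
    unfolding as_morphism_def using q_functor q_inv_mor[OF G] Tinv q_mor by auto
qed

end

theorem theorem5p5:
  fixes C :: "('o, 'm) cat" and S :: "'m set set" and To :: "'o \<Rightarrow> 'o" and Tm :: "'m \<Rightarrow> 'm"
    and K :: "'k ring" and H :: "'o \<Rightarrow> ('k, 'v) module" and Hm :: "'m \<Rightarrow> 'v \<Rightarrow> 'v"
    and E :: "('o, 'e) cat" and q :: "'e \<Rightarrow> 'm" and act :: "'e \<Rightarrow> 'v \<Rightarrow> 'e"
  assumes assoc: "association_schemoid C S To Tm"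
    and grpd: "groupoid C"
    and conn: "connected C"
    and Tinv: "\<forall>f\<in>cmor C. Tm f = inv_mor C f"
    and Hfun: "mod_functor C K H Hm"
    and ext: "linear_extension C K H Hm E q act"
  defines "St \<equiv> (\<lambda>\<sigma>. {e \<in> cmor E. q e \<in> \<sigma>}) ` S"
  shows "quasi_schemoid E St
    \<and> groupoid E
    \<and> association_schemoid E St id (inv_mor E)
    \<and> as_morphism E St id (inv_mor E) C S To Tm id q
    \<and> (\<forall>g\<in>cmor C. \<forall>g'\<in>cmor C. carrier (H (ccod C g)) \<approx> carrier (H (ccod C g')))
    \<and> (\<forall>\<sigma>\<in>St. \<forall>\<tau>\<in>St. \<forall>\<mu>\<in>St. \<forall>f\<in>\<sigma>. \<forall>g\<in>cmor C.
         pairs E \<tau> \<mu> f \<approx>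
           carrier (H (ccod C g)) \<times> pairs C (img_block S q \<tau>) (img_block S q \<mu>) (q f))"
proof -
  have C: "category C" using grpd by (rule groupoid_category)
  interpret lin_ext C K H Hm E q act using C Hfun ext by unfold_locales
  have QS: "quasi_schemoid C S" using assoc unfolding association_schemoid_def by blast
  then have P: "is_partition (cmor C) S" unfolding quasi_schemoid_def by blast
  have "pairs E \<tau> \<mu> f \<approx> carrier (H (ccod C g)) \<times> pairs C (img_block S q \<tau>) (img_block S q \<mu>) (q f)"
    if \<tau>: "\<tau> \<in> St" and \<mu>: "\<mu> \<in> St" and f: "f \<in> cmor E" and g: "g \<in> cmor C" for \<tau> \<mu> f g
  proof -
    obtain \<sigma> \<sigma>' where "\<sigma> \<in> S" "\<sigma>' \<in> S" "\<tau> = {e \<in> cmor E. q e \<in> \<sigma>}" "\<mu> = {e \<in> cmor E. q e \<in> \<sigma>'}"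
      using \<tau> \<mu> unfolding St_def by blast
    moreover have "\<sigma> \<subseteq> cmor C" "\<sigma>' \<subseteq> cmor C"
      using P calculation unfolding is_partition_def by blast+
    ultimately show ?thesis
      using pairs_preimage_eqpoll[OF grpd conn _ _ f g] img_block_preimage[OF P q_onto] by simp
  qed
  moreover have "carrier (H (ccod C g)) \<approx> carrier (H (ccod C g'))"
    if "g \<in> cmor C" "g' \<in> cmor C" for g g'
    using mod_functor_carrier_eqpoll[OF Hfun grpd conn] cat_cod[OF C] that by blast
  ultimately show ?thesis
    using quasi_schemoid_preimage[OF QS grpd conn] groupoid_if_base_groupoid[OF grpd]
      association_schemoid_preimage[OF assoc grpd conn Tinv] as_morphism_q[OF assoc grpd Tinv]
    unfolding St_def by blast
qed

end
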